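(* Let $m,n\in\mathbb{N}$, $m\ge2$, and $x_1,\dots,x_m\in(0,1)$. Suppose that $X_{(1)},\dots,X_{(m)}$ are independent random variables with $X_{(i)}\sim B(n,x_i)$ for $i=1,\dots,m$; that $S_{mn}^*\sim B(mn,\bar x)$ with $\bar x=\frac1m\sum_{i=1}^m x_i$; and that, for each $i=1,\dots,m$, $X_{(i),1},\dots,X_{(i),m}$ are independent random variables with $X_{(i),j}\sim B(n,x_i)$ for $j=1,\dots,m$. Then \begin{align*} X_{(1)}+\dots+X_{(m)}&\leqslant_{\mathrm{cx}} S_{mn}^*,\\ F_{S_{mn}^*}&\leqslant_{\mathrm{cx}}\tfrac1m\bigl[F_{X_{(1),1}+\dots+X_{(1),m}}+\dots+F_{X_{(m),1}+\dots+X_{(m),m}}\bigr],\\ F_{X_{(1)}+\dots+X_{(m)}}&\leqslant_{\mathrm{cx}}\tfrac1m\bigl[F_{X_{(1),1}+\dots+X_{(1),m}}+\dots+F_{X_{(m),1}+\dots+X_{(m),m}}\bigr]. \end{align*}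
   Context: $B(n,p)$ denotes the binomial distribution: $P(X=k)=\binom nk p^k(1-p)^{n-k}$, $k=0,\dots,n$. $F_X(t)=P(X<t)$. For distribution functions $G,H$ of probability measures with finite first moment, $G\leqslant_{\mathrm{cx}}H$ means $\int f\,dG\le\int f\,dH$ for all convex $f:\mathbb{R}\to\mathbb{R}$ for which the integrals exist; for random variables, $X\leqslant_{\mathrm{cx}}Y$ means $F_X\leqslant_{\mathrm{cx}}F_Y$. A convex combination of distribution functions is the distribution function of the corresponding mixture. *)

theory Defs
  imports "HOL-Probability.Probability"
begin

definition cx_le :: "real measure \<Rightarrow> real measure \<Rightarrow> bool" where
  "cx_le G H \<longleftrightarrow>
     (\<forall>f::real \<Rightarrow> real. convex_on UNIV f \<longrightarrow> integrable G f \<longrightarrow> integrable H f \<longrightarrow>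
        (\<integral>t. f t \<partial>G) \<le> (\<integral>t. f t \<partial>H))"

definition unif_mixture :: "nat set \<Rightarrow> (nat \<Rightarrow> real measure) \<Rightarrow> real measure" where
  "unif_mixture I K =
     measure_of UNIV (sets borel) (\<lambda>A. (\<Sum>i\<in>I. emeasure (K i) A) / of_nat (card I))"

definition binomial_rv :: "'a measure \<Rightarrow> ('a \<Rightarrow> real) \<Rightarrow> nat \<Rightarrow> real \<Rightarrow> bool" where
  "binomial_rv M X n p \<longleftrightarrow> X \<in> borel_measurable M \<and>
     (\<forall>k\<le>n. measure M {\<omega>\<in>space M. X \<omega> = real k} = real (n choose k) * p ^ k * (1 - p) ^ (n - k))"

end

theory Submission
  imports Defs
begin

text \<open>For independent Bernoulli variables with success probabilities \<open>p\<^sub>1, \<dots>, p\<^sub>k\<close>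
  and their sum \<open>T\<close>, the expectation \<open>E f(T)\<close> is computed by conditioning on one variable at
  a time; a sum of independent \<open>B(n, x\<^sub>i)\<close> variables is the case where each \<open>x\<^sub>i\<close> is
  repeated \<open>n\<close> times. For convex \<open>f\<close>, \<open>E f(T)\<close> depends on two of the \<open>p\<^sub>i\<close> with a fixed
  sum only through their product and increases with it; moving the \<open>p\<^sub>i\<close> one by one to their
  mean therefore increases \<open>E f(T)\<close> (Hoeffding), which is the first inequality. The second is
  Jensen's inequality for \<open>p \<mapsto> E f(B(N, p))\<close>, which is convex because its second derivative
  is a nonnegative combination of second differences of \<open>f\<close>. Both inequalities hold for every
  convex \<open>f\<close> (all laws involved have finite support), so the third follows by transitivity.\<close>

text \<open>\<open>poibin_expectation f [p\<^sub>1, \<dots>, p\<^sub>k]\<close> is the expectation of \<open>f (B\<^sub>1 + \<dots> + B\<^sub>k)\<close> for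
  independent Bernoulli variables \<open>B\<^sub>i\<close> with success probabilities \<open>p\<^sub>i\<close>, computed by
  conditioning on \<open>B\<^sub>1\<close>.\<close>
primrec poibin_expectation :: "(real \<Rightarrow> real) \<Rightarrow> real list \<Rightarrow> real" where
  "poibin_expectation f [] = f 0"
| "poibin_expectation f (p # ps) =
     (1 - p) * poibin_expectation f ps + p * poibin_expectation (\<lambda>t. f (t + 1)) ps"

lemma poibin_expectation_add:
  "poibin_expectation (\<lambda>t. f t + g t) ps = poibin_expectation f ps + poibin_expectation g ps"
  by (induction ps arbitrary: f g) (simp_all add: algebra_simps)

lemma poibin_expectation_diff:
  "poibin_expectation (\<lambda>t. f t - g t) ps = poibin_expectation f ps - poibin_expectation g ps"
  by (induction ps arbitrary: f g) (simp_all add: ring_distribs)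

lemma poibin_expectation_cmult:
  "poibin_expectation (\<lambda>t. c * f t) ps = c * poibin_expectation f ps"
  by (induction ps arbitrary: f) (simp_all add: algebra_simps)

lemma poibin_expectation_nonneg:
  "(\<And>t. f t \<ge> 0) \<Longrightarrow> set ps \<subseteq> {0..1} \<Longrightarrow> poibin_expectation f ps \<ge> 0"
  by (induction ps arbitrary: f) auto

lemma poibin_expectation_append:
  "poibin_expectation f (ps @ qs) =
     poibin_expectation (\<lambda>t. poibin_expectation (\<lambda>s. f (t + s)) qs) ps"
  by (induction ps arbitrary: f) (simp_all add: ac_simps)

lemma poibin_expectation_swap:
  "poibin_expectation f (p # q # ps) = poibin_expectation f (q # p # ps)"
  by (simp add: algebra_simps)

lemma poibin_expectation_remove1:
  "p \<in> set qs \<Longrightarrow> poibin_expectation f (p # remove1 p qs) = poibin_expectation f qs"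
proof (induction qs arbitrary: f)
  case (Cons q qs)
  show ?case
  proof (cases "q = p")
    case False
    then have "poibin_expectation f (p # remove1 p (q # qs)) = poibin_expectation f (p # q # remove1 p qs)"
      by simp
    also have "\<dots> = poibin_expectation f (q # p # remove1 p qs)"
      by (rule poibin_expectation_swap)
    also have "\<dots> = poibin_expectation f (q # qs)"
      using Cons False Cons.IH[of "\<lambda>t. f (t + 1)"] by simp
    finally show ?thesis .
  qed simp
qed simp

lemma poibin_expectation_perm:
  "mset ps = mset qs \<Longrightarrow> poibin_expectation f ps = poibin_expectation f qs"
proof (induction ps arbitrary: qs f)
  case (Cons p ps)
  then have p: "p \<in> set qs" by (metis list.set_intros(1) set_mset_mset)
  have "mset ps = mset (remove1 p qs)"
    using Cons.prems by simp (metis add_mset_remove_trivial)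
  from Cons.IH[OF this] have "poibin_expectation f (p # ps) = poibin_expectation f (p # remove1 p qs)"
    by simp
  also have "\<dots> = poibin_expectation f qs"
    using p by (rule poibin_expectation_remove1)
  finally show ?case .
qed simp

definition discrete_convex :: "(real \<Rightarrow> real) \<Rightarrow> bool" where
  "discrete_convex f \<longleftrightarrow> (\<forall>t. 2 * f (t + 1) \<le> f t + f (t + 2))"

lemma convex_on_imp_discrete_convex: "convex_on UNIV f \<Longrightarrow> discrete_convex f"
  unfolding discrete_convex_def
proof
  fix t assume "convex_on UNIV f"
  then have "f ((1 - 1/2) *\<^sub>R t + (1/2) *\<^sub>R (t + 2)) \<le> (1 - 1/2) * f t + (1/2) * f (t + 2)"
    by (rule convex_onD) auto
  moreover have "(1 - 1/2) *\<^sub>R t + (1/2) *\<^sub>R (t + 2) = t + 1" by (simp add: field_simps)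
  ultimately show "2 * f (t + 1) \<le> f t + f (t + 2)" by simp
qed

lemma poibin_expectation_second_difference_nonneg:
  assumes "discrete_convex f" "set ps \<subseteq> {0..1}"
  shows "poibin_expectation (\<lambda>t. f (t + 2) - 2 * f (t + 1) + f t) ps \<ge> 0"
  using assms by (intro poibin_expectation_nonneg) (auto simp: discrete_convex_def algebra_simps)

text \<open>Two success probabilities with a fixed sum enter only through their product, and
  the dependence on the product is monotone by discrete convexity.\<close>
lemma poibin_expectation_spread_le:
  assumes "discrete_convex f" "set ps \<subseteq> {0..1}" "p + q = p' + q'" "p * q \<le> p' * q'"
  shows "poibin_expectation f (p # q # ps) \<le> poibin_expectation f (p' # q' # ps)"
proof -
  define E0 E1 E2 where "E0 = poibin_expectation f ps"
    and "E1 = poibin_expectation (\<lambda>t. f (t + 1)) ps"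
    and "E2 = poibin_expectation (\<lambda>t. f (t + 2)) ps"
  have D: "E2 - 2 * E1 + E0 \<ge> 0"
    using poibin_expectation_second_difference_nonneg[OF assms(1,2)]
    by (simp add: E0_def E1_def E2_def poibin_expectation_add poibin_expectation_diff
        poibin_expectation_cmult)
  have expand: "poibin_expectation f (a # b # ps) = (1 - (a + b)) * E0 + (a + b) * E1 + a * b * (E2 - 2 * E1 + E0)"
    for a b
    by (simp add: E0_def E1_def E2_def algebra_simps)
  have "p * q * (E2 - 2 * E1 + E0) \<le> p' * q' * (E2 - 2 * E1 + E0)"
    by (rule mult_right_mono[OF assms(4) D])
  then show ?thesis unfolding expand assms(3) by simp
qed

lemma discrete_convex_shift: "discrete_convex f \<Longrightarrow> discrete_convex (\<lambda>t. f (t + c))"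
  unfolding discrete_convex_def by (metis add.commute add.left_commute)

lemma list_mean_between_elements:
  fixes xs :: "real list"
  assumes "xs \<noteq> []" "sum_list xs = real (length xs) * a"
  shows "\<exists>x\<in>set xs. x \<le> a" "\<exists>x\<in>set xs. a \<le> x"
proof -
  have mean: "sum_list (map (\<lambda>_. a) xs) = sum_list (map (\<lambda>x. x) xs)"
    using assms(2) by (simp add: sum_list_triv)
  show "\<exists>x\<in>set xs. x \<le> a"
    using sum_list_strict_mono[OF assms(1), of "\<lambda>_. a" "\<lambda>x. x"] mean by force
  show "\<exists>x\<in>set xs. a \<le> x"
    using sum_list_strict_mono[OF assms(1), of "\<lambda>x. x" "\<lambda>_. a"] mean by force
qed

lemma poibin_expectation_spread_to_mean:
  assumes "discrete_convex f" "set rest \<subseteq> {0..1}" "p \<le> a" "a \<le> q"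
  shows "poibin_expectation f (p # q # rest) \<le> poibin_expectation f (a # (p + q - a) # rest)"
proof (rule poibin_expectation_spread_le[OF assms(1,2)])
  show "p * q \<le> a * (p + q - a)"
    using mult_nonneg_nonneg[of "a - p" "q - a"] assms(3,4) by (simp add: algebra_simps)
qed simp

lemma poibin_expectation_le_mean_first:
  assumes f: "discrete_convex f" and ps: "set ps \<subseteq> {0..1}" "length ps = Suc N"
    and mean: "sum_list ps = real (Suc N) * a"
  obtains r where "length r = N" "set r \<subseteq> {0..1}" "sum_list r = real N * a"
    and "poibin_expectation f ps \<le> poibin_expectation f (a # r)"
proof (cases "a \<in> set ps")
  case True
  define rest where "rest = remove1 a ps"
  have "mset ps = mset (a # rest)"
    using True by (simp add: rest_def)
  then have sum_len: "sum_list ps = a + sum_list rest" "length ps = Suc (length rest)"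
    by (metis sum_mset_sum_list sum_list.Cons, metis mset_eq_length length_Cons)
  show ?thesis
  proof (rule that)
    show "length rest = N"
      using sum_len(2) ps(2) by simp
    then show "sum_list rest = real N * a"
      using sum_len mean by (simp add: algebra_simps)
    show "set rest \<subseteq> {0..1}"
      using ps(1) unfolding rest_def by (meson order_trans set_remove1_subset)
    show "poibin_expectation f ps \<le> poibin_expectation f (a # rest)"
      by (simp only: rest_def poibin_expectation_remove1[OF True])
  qed
next
  case False
  obtain p q where "p \<in> set ps" "p \<le> a" "q \<in> set ps" "a \<le> q"
    using list_mean_between_elements[of ps a] mean ps(2) by fastforce
  with False have pq: "p \<in> set ps" "p < a" "q \<in> set ps" "a < q"
    by (auto simp: order_le_less)
  define rest where "rest = remove1 q (remove1 p ps)"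
  have "q \<in> set (remove1 p ps)"
    using pq by (metis in_set_remove1 order_less_asym)
  then have perm: "mset ps = mset (p # q # rest)"
    using pq(1) unfolding rest_def by (metis insert_DiffM mset_remove1 set_mset_mset mset.simps(2))
  then have sum_len: "sum_list ps = p + q + sum_list rest" "length ps = Suc (Suc (length rest))"
    by (metis sum_mset_sum_list sum_list.Cons add.assoc, metis mset_eq_length length_Cons)
  have rest: "set rest \<subseteq> {0..1}"
    using ps(1) unfolding rest_def by (meson order_trans set_remove1_subset)
  show ?thesis
  proof (rule that)
    show "length ((p + q - a) # rest) = N"
      using sum_len(2) ps(2) by simp
    then show "sum_list ((p + q - a) # rest) = real N * a"
      using sum_len mean by (simp add: algebra_simps)
    show "set ((p + q - a) # rest) \<subseteq> {0..1}"
      using rest ps(1) pq by auto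
    show "poibin_expectation f ps \<le> poibin_expectation f (a # (p + q - a) # rest)"
      using poibin_expectation_perm[OF perm, of f] poibin_expectation_spread_to_mean[OF f rest]
        pq(2,4) by simp
  qed
qed

theorem poibin_expectation_le_binomial:
  assumes "discrete_convex f" "set ps \<subseteq> {0..1}" "sum_list ps = real (length ps) * a"
  shows "poibin_expectation f ps \<le> poibin_expectation f (replicate (length ps) a)"
  using assms
proof (induction "length ps" arbitrary: ps f)
  case (Suc N)
  have mean: "sum_list ps = real (Suc N) * a"
    using Suc.prems(3) Suc.hyps(2) by simp
  obtain r where r: "length r = N" "set r \<subseteq> {0..1}" "sum_list r = real N * a"
    and spread: "poibin_expectation f ps \<le> poibin_expectation f (a # r)"
    by (rule poibin_expectation_le_mean_first[OF Suc.prems(1,2) Suc.hyps(2)[symmetric] mean])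
  obtain p q where "p \<in> set ps" "p \<le> a" "q \<in> set ps" "a \<le> q"
    using list_mean_between_elements[OF _ Suc.prems(3)] Suc.hyps(2) by fastforce
  then have a: "0 \<le> a" "a \<le> 1"
    using Suc.prems(2) by force+
  have IH: "poibin_expectation g r \<le> poibin_expectation g (replicate N a)" if "discrete_convex g" for g
    using Suc.hyps(1)[of r g] r that by simp
  have "poibin_expectation f (a # r) \<le> poibin_expectation f (replicate (Suc N) a)"
    using IH[OF Suc.prems(1)] IH[OF discrete_convex_shift[OF Suc.prems(1)]] a
    by (simp add: add_mono mult_left_mono)
  then show ?case
    using spread Suc.hyps(2) by (metis order_trans)
qed simp

lemma poibin_expectation_replicate_deriv:
  "((\<lambda>p. poibin_expectation f (replicate N p)) has_real_derivative
      real N * poibin_expectation (\<lambda>t. f (t + 1) - f t) (replicate (N - 1) p)) (at p)"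
proof (induction N arbitrary: f)
  case (Suc N)
  have "((\<lambda>p. (1 - p) * poibin_expectation f (replicate N p) +
        p * poibin_expectation (\<lambda>t. f (t + 1)) (replicate N p)) has_real_derivative
      - poibin_expectation f (replicate N p)
        + (1 - p) * (real N * poibin_expectation (\<lambda>t. f (t + 1) - f t) (replicate (N - 1) p))
      + (poibin_expectation (\<lambda>t. f (t + 1)) (replicate N p)
        + p * (real N * poibin_expectation (\<lambda>t. f (t + 2) - f (t + 1)) (replicate (N - 1) p))))
     (at p)"
    using Suc.IH[of f] Suc.IH[of "\<lambda>t. f (t + 1)"]
    by (auto intro!: derivative_eq_intros simp: add.assoc)
  moreover have "- poibin_expectation f (replicate N p)
        + (1 - p) * (real N * poibin_expectation (\<lambda>t. f (t + 1) - f t) (replicate (N - 1) p))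
      + (poibin_expectation (\<lambda>t. f (t + 1)) (replicate N p)
        + p * (real N * poibin_expectation (\<lambda>t. f (t + 2) - f (t + 1)) (replicate (N - 1) p)))
    = real (Suc N) * poibin_expectation (\<lambda>t. f (t + 1) - f t) (replicate N p)"
    by (cases N) (simp_all add: poibin_expectation_diff algebra_simps)
  ultimately show ?case by simp
qed simp

text \<open>The second derivative of \<open>p \<mapsto> E f(B(N, p))\<close> is \<open>N (N - 1) E \<Delta>\<^sup>2f(B(N - 2, p))\<close>.\<close>
lemma convex_on_poibin_expectation_replicate:
  assumes "discrete_convex f"
  shows "convex_on {0..1} (\<lambda>p. poibin_expectation f (replicate N p))"
proof (rule f''_ge0_imp_convex)
  fix p :: real
  show "((\<lambda>p. poibin_expectation f (replicate N p)) has_real_derivative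
      real N * poibin_expectation (\<lambda>t. f (t + 1) - f t) (replicate (N - 1) p)) (at p)"
    by (rule poibin_expectation_replicate_deriv)
  show "((\<lambda>p. real N * poibin_expectation (\<lambda>t. f (t + 1) - f t) (replicate (N - 1) p))
      has_real_derivative real N * (real (N - 1) *
        poibin_expectation (\<lambda>t. (f (t + 2) - f (t + 1)) - (f (t + 1) - f t)) (replicate (N - 1 - 1) p)))
     (at p)"
    using poibin_expectation_replicate_deriv[of "\<lambda>t. f (t + 1) - f t" "N - 1" p]
    by (intro DERIV_cmult) (simp add: add.assoc)
  assume "p \<in> {0..1}"
  then have "poibin_expectation (\<lambda>t. (f (t + 2) - f (t + 1)) - (f (t + 1) - f t)) (replicate (N - 1 - 1) p) \<ge> 0"
    using poibin_expectation_second_difference_nonneg[OF assms, of "replicate (N - 1 - 1) p"]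
    by (simp add: set_replicate_conv_if algebra_simps)
  then show "real N * (real (N - 1) *
      poibin_expectation (\<lambda>t. (f (t + 2) - f (t + 1)) - (f (t + 1) - f t)) (replicate (N - 1 - 1) p)) \<ge> 0"
    by simp
qed simp

theorem binomial_expectation_mean_le:
  assumes "discrete_convex f" "finite I" "I \<noteq> {}" "\<And>i. i \<in> I \<Longrightarrow> x i \<in> {0..1}"
  shows "poibin_expectation f (replicate N ((\<Sum>i\<in>I. x i) / real (card I))) \<le>
     (\<Sum>i\<in>I. poibin_expectation f (replicate N (x i))) / real (card I)"
proof -
  have "poibin_expectation f (replicate N (\<Sum>i\<in>I. (1 / real (card I)) *\<^sub>R x i)) \<le>
      (\<Sum>i\<in>I. (1 / real (card I)) * poibin_expectation f (replicate N (x i)))"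
    using assms
    by (intro convex_on_sum[OF assms(2,3) convex_on_poibin_expectation_replicate[OF assms(1)]]) auto
  then show ?thesis
    by (simp add: sum_distrib_left[symmetric] sum_divide_distrib[symmetric])
qed

lemma expectation_binomial_pmf_eq_poibin_expectation:
  assumes "p \<in> {0..1}"
  shows "measure_pmf.expectation (binomial_pmf n p) (\<lambda>k. f (real k)) =
    poibin_expectation f (replicate n p)"
proof (induction n arbitrary: f)
  case 0
  then show ?case using assms by (simp add: binomial_pmf_0)
next
  case (Suc n)
  have shift: "binomial_pmf n p \<bind> (\<lambda>k. return_pmf ((if b then 1 else 0) + k)) =
      map_pmf (\<lambda>k. (if b then 1 else 0) + k) (binomial_pmf n p)" for b
    by (simp add: map_pmf_def)
  have "measure_pmf.expectation (binomial_pmf (Suc n) p) (\<lambda>k. f (real k)) =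
     (\<Sum>b\<in>UNIV. pmf (bernoulli_pmf p) b *\<^sub>R measure_pmf.expectation
        (binomial_pmf n p \<bind> (\<lambda>k. return_pmf ((if b then 1 else 0) + k))) (\<lambda>k. f (real k)))"
    unfolding binomial_pmf_Suc[OF assms]
    by (rule pmf_expectation_bind) (auto simp: shift finite_set_pmf_binomial_pmf[OF assms])
  also have "\<dots> = (1 - p) * poibin_expectation f (replicate n p) +
      p * poibin_expectation (\<lambda>t. f (t + 1)) (replicate n p)"
    using assms by (simp only: UNIV_bool shift) (simp add: Suc.IH[symmetric] ac_simps)
  finally show ?case by simp
qed

lemma expectation_binomial_pmf:
  assumes "p \<in> {0..1}"
  shows "measure_pmf.expectation (binomial_pmf n p) (\<lambda>k. f (real k)) =
    (\<Sum>k\<le>n. real (n choose k) * p ^ k * (1 - p) ^ (n - k) * f (real k))"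
proof -
  have "set_pmf (binomial_pmf n p) \<subseteq> {..n}"
    using assms by (auto simp: set_pmf_binomial_eq)
  then show ?thesis
    using assms by (subst integral_measure_pmf_real[where A="{..n}"]) (auto simp: mult_ac)
qed

lemma (in finite_measure) integrable_AE_finite_range:
  fixes h :: "'a \<Rightarrow> real"
  assumes "h \<in> borel_measurable M" "finite R" "AE \<omega> in M. h \<omega> \<in> R"
  shows "integrable M h"
proof (rule integrable_const_bound[where B="\<Sum>r\<in>R. \<bar>r\<bar>"])
  show "AE \<omega> in M. norm (h \<omega>) \<le> (\<Sum>r\<in>R. \<bar>r\<bar>)"
    using assms(3) by eventually_elim (use assms(2) in \<open>auto intro: member_le_sum\<close>)
qed fact

lemma (in prob_space) binomial_rv_AE_range:
  assumes "binomial_rv M Z n p"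
  shows "AE \<omega> in M. Z \<omega> \<in> real ` {..n}"
proof -
  have [measurable]: "Z \<in> borel_measurable M"
    using assms by (simp add: binomial_rv_def)
  have "prob (\<Union>k\<le>n. {\<omega>\<in>space M. Z \<omega> = real k}) = (\<Sum>k\<le>n. prob {\<omega>\<in>space M. Z \<omega> = real k})"
    by (rule finite_measure_finite_Union) (auto simp: disjoint_family_on_def)
  also have "\<dots> = (\<Sum>k\<le>n. real (n choose k) * p ^ k * (1 - p) ^ (n - k))"
    using assms by (simp add: binomial_rv_def)
  also have "\<dots> = (p + (1 - p)) ^ n"
    by (subst binomial_ring) (simp add: mult_ac)
  finally have "prob (\<Union>k\<le>n. {\<omega>\<in>space M. Z \<omega> = real k}) = 1"
    by simp
  then have "AE \<omega> in M. \<omega> \<in> (\<Union>k\<le>n. {\<omega>\<in>space M. Z \<omega> = real k})"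
    by (intro AE_prob_1) measurable
  then show ?thesis
    by eventually_elim auto
qed

lemma (in prob_space) integral_binomial_rv:
  assumes Z: "binomial_rv M Z n p" and p: "p \<in> {0..1}" and g: "g \<in> borel_measurable borel"
  shows "(\<integral>\<omega>. g (Z \<omega>) \<partial>M) = poibin_expectation g (replicate n p)"
proof -
  have [measurable]: "Z \<in> borel_measurable M" "g \<in> borel_measurable borel"
    using Z g by (simp_all add: binomial_rv_def)
  have "AE \<omega> in M. g (Z \<omega>) = (\<Sum>k\<le>n. indicator {\<omega>\<in>space M. Z \<omega> = real k} \<omega> * g (real k))"
    using binomial_rv_AE_range[OF Z] AE_space
  proof eventually_elim
    case (elim \<omega>)
    then obtain j where j: "j \<le> n" "Z \<omega> = real j" by auto
    then have "indicator {\<omega>\<in>space M. Z \<omega> = real k} \<omega> * g (real k) = (if k = j then g (real j) else 0)"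
      for k using elim by auto
    then show ?case
      using j by (simp add: sum.delta)
  qed
  then have "(\<integral>\<omega>. g (Z \<omega>) \<partial>M) =
      (\<integral>\<omega>. (\<Sum>k\<le>n. indicator {\<omega>\<in>space M. Z \<omega> = real k} \<omega> * g (real k)) \<partial>M)"
    by (intro integral_cong_AE) measurable
  also have "\<dots> = (\<Sum>k\<le>n. prob {\<omega>\<in>space M. Z \<omega> = real k} * g (real k))"
    by (subst Bochner_Integration.integral_sum)
      (auto intro!: integrable_real_indicator simp: less_top[symmetric])
  also have "\<dots> = measure_pmf.expectation (binomial_pmf n p) (\<lambda>k. g (real k))"
    using Z p by (simp add: binomial_rv_def expectation_binomial_pmf)
  finally show ?thesis
    using p by (simp add: expectation_binomial_pmf_eq_poibin_expectation)
qed

lemma (in prob_space) AE_sum_binomial_rvs_range: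
  assumes "finite I" "\<And>i. i \<in> I \<Longrightarrow> binomial_rv M (X i) n (x i)"
  shows "AE \<omega> in M. (\<Sum>i\<in>I. X i \<omega>) \<in> real ` {..card I * n}"
proof -
  have "AE \<omega> in M. \<forall>i\<in>I. X i \<omega> \<in> real ` {..n}"
    using assms(1) binomial_rv_AE_range[OF assms(2)] by (simp add: AE_finite_all)
  then show ?thesis
  proof eventually_elim
    case (elim \<omega>)
    then have "\<forall>i\<in>I. \<exists>j. X i \<omega> = real j \<and> j \<le> n"
      by auto
    then obtain k where k: "\<forall>i\<in>I. X i \<omega> = real (k i) \<and> k i \<le> n"
      by (rule bchoice[THEN exE])
    then have "(\<Sum>i\<in>I. X i \<omega>) = real (\<Sum>i\<in>I. k i)"
      by simp
    moreover have "(\<Sum>i\<in>I. k i) \<le> card I * n"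
      using sum_bounded_above[of I k n] k by simp
    ultimately show ?case
      by (metis atMost_iff image_eqI)
  qed
qed


lemma (in prob_space) integral_add_indep_binomial_rv:
  assumes indep: "indep_var borel Z borel T" and Z: "binomial_rv M Z n p" "p \<in> {0..1}"
    and T: "T \<in> borel_measurable M" "finite R" "AE \<omega> in M. T \<omega> \<in> R"
    and T_integral: "\<And>h. h \<in> borel_measurable borel \<Longrightarrow>
      (\<integral>\<omega>. h (T \<omega>) \<partial>M) = poibin_expectation h ps"
    and g: "g \<in> borel_measurable borel"
  shows "(\<integral>\<omega>. g (Z \<omega> + T \<omega>) \<partial>M) = poibin_expectation g (replicate n p @ ps)"
proof -
  have [measurable]: "Z \<in> borel_measurable M" "T \<in> borel_measurable M" "g \<in> borel_measurable borel"
    using Z T g by (simp_all add: binomial_rv_def)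
  define F where "F k = (\<lambda>\<omega>. indicator {real k} (Z \<omega>) * g (real k + T \<omega>))" for k
  have F_integral: "integrable M (F k) \<and> (\<integral>\<omega>. F k \<omega> \<partial>M) =
      prob {\<omega>\<in>space M. Z \<omega> = real k} * poibin_expectation (\<lambda>s. g (real k + s)) ps" for k
  proof -
    have "indep_var borel ((\<lambda>z. indicator {real k} z :: real) \<circ> Z) borel ((\<lambda>t. g (real k + t)) \<circ> T)"
      by (rule indep_var_compose[OF indep]) measurable
    then have indep_k: "indep_var
        borel (\<lambda>\<omega>. indicator {real k} (Z \<omega>) :: real) borel (\<lambda>\<omega>. g (real k + T \<omega>))"
      by (simp add: comp_def)
    have int_Z: "integrable M (\<lambda>\<omega>. indicator {real k} (Z \<omega>) :: real)"
      by (rule integrable_const_bound[where B=1]) auto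
    have "AE \<omega> in M. g (real k + T \<omega>) \<in> (\<lambda>t. g (real k + t)) ` R"
      using T(3) by eventually_elim simp
    then have int_T: "integrable M (\<lambda>\<omega>. g (real k + T \<omega>))"
      using T(2) by (intro integrable_AE_finite_range) simp_all
    have [measurable]: "{\<omega>\<in>space M. Z \<omega> = real k} \<in> events"
      by measurable
    have "(\<integral>\<omega>. indicator {real k} (Z \<omega>) \<partial>M) = (\<integral>\<omega>. indicator {\<omega>\<in>space M. Z \<omega> = real k} \<omega> \<partial>M)"
      by (intro Bochner_Integration.integral_cong) (auto simp: indicator_def)
    also have "\<dots> = prob {\<omega>\<in>space M. Z \<omega> = real k}"
      by simp
    finally show ?thesis
      using T_integral[of "\<lambda>t. g (real k + t)"]
      by (simp add: F_def indep_var_integrable[OF indep_k int_Z int_T]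
          indep_var_lebesgue_integral[OF indep_k int_Z int_T])
  qed
  have AE_split: "AE \<omega> in M. g (Z \<omega> + T \<omega>) = (\<Sum>k\<le>n. F k \<omega>)"
    using binomial_rv_AE_range[OF Z(1)]
  proof eventually_elim
    case (elim \<omega>)
    then obtain j where j: "j \<le> n" "Z \<omega> = real j" by auto
    then have "F k \<omega> = (if k = j then g (real j + T \<omega>) else 0)" for k
      by (auto simp: F_def)
    then show ?case
      using j by (simp add: sum.delta)
  qed
  have "(\<lambda>\<omega>. g (Z \<omega> + T \<omega>)) \<in> borel_measurable M" "(\<lambda>\<omega>. \<Sum>k\<le>n. F k \<omega>) \<in> borel_measurable M"
    unfolding F_def by measurable
  then have "(\<integral>\<omega>. g (Z \<omega> + T \<omega>) \<partial>M) = (\<integral>\<omega>. (\<Sum>k\<le>n. F k \<omega>) \<partial>M)"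
    using AE_split by (rule integral_cong_AE)
  also have "\<dots> = (\<Sum>k\<le>n. \<integral>\<omega>. F k \<omega> \<partial>M)"
    using F_integral by (intro Bochner_Integration.integral_sum) auto
  also have "\<dots> = measure_pmf.expectation (binomial_pmf n p)
      (\<lambda>k. poibin_expectation (\<lambda>s. g (real k + s)) ps)"
    using Z expectation_binomial_pmf[OF Z(2), of n "\<lambda>t. poibin_expectation (\<lambda>s. g (t + s)) ps"]
    by (simp add: F_integral binomial_rv_def)
  also have "\<dots> = poibin_expectation g (replicate n p @ ps)"
    using expectation_binomial_pmf_eq_poibin_expectation[OF Z(2),
        of n "\<lambda>t. poibin_expectation (\<lambda>s. g (t + s)) ps"]
    by (simp add: poibin_expectation_append)
  finally show ?thesis .
qed

lemma (in prob_space) integral_sum_indep_binomial_rvs: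
  assumes "distinct xs" "indep_vars (\<lambda>_. borel) X (set xs)"
    and "\<And>i. i \<in> set xs \<Longrightarrow> binomial_rv M (X i) n (x i)" "\<And>i. i \<in> set xs \<Longrightarrow> x i \<in> {0..1}"
    and "g \<in> borel_measurable borel"
  shows "(\<integral>\<omega>. g (\<Sum>i\<in>set xs. X i \<omega>) \<partial>M) =
    poibin_expectation g (concat (map (\<lambda>i. replicate n (x i)) xs))"
  using assms
proof (induction xs arbitrary: g)
  case Nil
  show ?case by (simp add: prob_space)
next
  case (Cons a xs)
  have indep_xs: "indep_vars (\<lambda>_. borel) X (set xs)"
    using Cons.prems(2) by (rule indep_vars_subset) auto
  have IH: "(\<integral>\<omega>. h (\<Sum>i\<in>set xs. X i \<omega>) \<partial>M) =
      poibin_expectation h (concat (map (\<lambda>i. replicate n (x i)) xs))"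
    if "h \<in> borel_measurable borel" for h
    using Cons.prems(1,3,4) by (intro Cons.IH[OF _ indep_xs _ _ that]) auto
  have "(\<integral>\<omega>. g (X a \<omega> + (\<Sum>i\<in>set xs. X i \<omega>)) \<partial>M) =
      poibin_expectation g (replicate n (x a) @ concat (map (\<lambda>i. replicate n (x i)) xs))"
  proof (rule integral_add_indep_binomial_rv[OF _ _ _ _ _ _ IH Cons.prems(5)])
    show "indep_var borel (X a) borel (\<lambda>\<omega>. \<Sum>i\<in>set xs. X i \<omega>)"
      using Cons.prems(1,2) by (intro indep_vars_sum) auto
    show "(\<lambda>\<omega>. \<Sum>i\<in>set xs. X i \<omega>) \<in> borel_measurable M"
      using Cons.prems(3) by (intro borel_measurable_sum) (auto simp: binomial_rv_def)
    show "AE \<omega> in M. (\<Sum>i\<in>set xs. X i \<omega>) \<in> real ` {..card (set xs) * n}"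
      using Cons.prems(3) by (intro AE_sum_binomial_rvs_range) auto
  qed (use Cons.prems(3,4) in auto)
  then show ?case
    using Cons.prems(1) by simp
qed

lemma distr_eq_binomial_pmfI:
  assumes M: "prob_space M" and F: "F \<in> borel_measurable M" and p: "p \<in> {0..1}"
    and F_integral: "\<And>g. g \<in> borel_measurable borel \<Longrightarrow>
      (\<integral>\<omega>. g (F \<omega>) \<partial>M) = poibin_expectation g (replicate N p)"
  shows "distr M borel F = distr (measure_pmf (binomial_pmf N p)) borel real"
proof (rule measure_eqI)
  fix A assume "A \<in> sets (distr M borel F)"
  then have [measurable]: "A \<in> sets borel" by simp
  interpret L: prob_space "distr M borel F"
    by (rule prob_space.prob_space_distr[OF M F])
  interpret B: prob_space "distr (measure_pmf (binomial_pmf N p)) borel real"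
    by (rule prob_space.prob_space_distr) (auto simp: measure_pmf.prob_space_axioms)
  have "measure (distr M borel F) A = (\<integral>\<omega>. indicator A (F \<omega>) \<partial>M)"
    using F by (simp flip: integral_distr)
  also have "\<dots> = measure_pmf.expectation (binomial_pmf N p) (\<lambda>k. indicator A (real k))"
    using p by (simp add: F_integral expectation_binomial_pmf_eq_poibin_expectation)
  also have "\<dots> = (\<integral>t. indicator A t \<partial>distr (measure_pmf (binomial_pmf N p)) borel real)"
    by (rule integral_distr[symmetric]) auto
  also have "\<dots> = measure (distr (measure_pmf (binomial_pmf N p)) borel real) A"
    by simp
  finally show "emeasure (distr M borel F) A = emeasure (distr (measure_pmf (binomial_pmf N p)) borel real) A"
    by (simp add: L.emeasure_eq_measure B.emeasure_eq_measure)
qed simp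

lemma (in prob_space) distr_sum_iid_binomial_rvs:
  assumes "distinct xs" "indep_vars (\<lambda>_. borel) Y (set xs)" "p \<in> {0..1}"
    and "\<And>j. j \<in> set xs \<Longrightarrow> binomial_rv M (Y j) n p"
  shows "distr M borel (\<lambda>\<omega>. \<Sum>j\<in>set xs. Y j \<omega>) =
    distr (measure_pmf (binomial_pmf (length xs * n) p)) borel real"
proof (rule distr_eq_binomial_pmfI[OF prob_space_axioms _ assms(3)])
  show "(\<lambda>\<omega>. \<Sum>j\<in>set xs. Y j \<omega>) \<in> borel_measurable M"
    using assms(4) by (intro borel_measurable_sum) (auto simp: binomial_rv_def)
  have "concat (map (\<lambda>j. replicate n p) xs) = replicate (length xs * n) p"
    by (induction xs) (simp_all add: replicate_add)
  then show "(\<integral>\<omega>. g (\<Sum>j\<in>set xs. Y j \<omega>) \<partial>M) = poibin_expectation g (replicate (length xs * n) p)"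
    if "g \<in> borel_measurable borel" for g
    using integral_sum_indep_binomial_rvs[of xs Y n "\<lambda>_. p" g] assms that by simp
qed

lemma unif_mixture_distr_pmf:
  assumes "finite I" "I \<noteq> {}"
    and K: "\<And>i. i \<in> I \<Longrightarrow> K i = distr (measure_pmf (Q i)) borel (real :: nat \<Rightarrow> real)"
  shows "unif_mixture I K = distr (measure_pmf (pmf_of_set I \<bind> Q)) borel real"
proof -
  let ?R = "distr (measure_pmf (pmf_of_set I \<bind> Q)) borel (real :: nat \<Rightarrow> real)"
  have "?R = measure_of UNIV (sets borel) (emeasure ?R)"
    by (metis measure_of_of_measure sets_distr space_borel space_distr)
  also have "\<dots> = unif_mixture I K"
    unfolding unif_mixture_def
  proof (rule measure_of_eq)
    fix A :: "real set" assume "A \<in> sigma_sets UNIV (sets borel)"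
    then have A: "A \<in> sets borel"
      by (metis sets.sigma_sets_eq space_borel)
    then show "emeasure ?R A = (\<Sum>i\<in>I. emeasure (K i) A) / of_nat (card I)"
      using assms by (simp add: emeasure_distr nn_integral_pmf_of_set K)
  qed simp
  finally show ?thesis ..
qed

lemma integral_unif_mixture_binomial:
  assumes "finite I" "I \<noteq> {}" "\<And>i. i \<in> I \<Longrightarrow> x i \<in> {0..1}"
    and "\<And>i. i \<in> I \<Longrightarrow> K i = distr (measure_pmf (binomial_pmf N (x i))) borel real"
    and "g \<in> borel_measurable borel"
  shows "(\<integral>t. g t \<partial>unif_mixture I K) =
    (\<Sum>i\<in>I. poibin_expectation g (replicate N (x i))) / real (card I)"
proof -
  have "(\<integral>t. g t \<partial>unif_mixture I K) =
     measure_pmf.expectation (pmf_of_set I \<bind> (\<lambda>i. binomial_pmf N (x i))) (\<lambda>k. g (real k))"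
    using assms by (simp add: unif_mixture_distr_pmf integral_distr)
  also have "\<dots> = (\<Sum>i\<in>I.
      measure_pmf.expectation (binomial_pmf N (x i)) (\<lambda>k. g (real k)) /\<^sub>R real (card I))"
    using assms(1-3) by (intro pmf_expectation_bind_pmf_of_set) (auto intro: finite_set_pmf_binomial_pmf)
  finally show ?thesis
    using assms(3)
    by (simp add: expectation_binomial_pmf_eq_poibin_expectation sum_divide_distrib divide_inverse_commute
        sum_distrib_left)
qed

lemma (in prob_space) integral_convex_sum_indep_binomial_rvs_le:
  assumes "distinct xs" "xs \<noteq> []" "indep_vars (\<lambda>_. borel) X (set xs)"
    and "\<And>i. i \<in> set xs \<Longrightarrow> binomial_rv M (X i) n (x i)" "\<And>i. i \<in> set xs \<Longrightarrow> x i \<in> {0..1}"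
    and "convex_on UNIV f"
  shows "(\<integral>\<omega>. f (\<Sum>i\<in>set xs. X i \<omega>) \<partial>M) \<le>
    poibin_expectation f (replicate (length xs * n) ((\<Sum>i\<in>set xs. x i) / length xs))"
proof -
  let ?ps = "concat (map (\<lambda>i. replicate n (x i)) xs)"
  have "f \<in> borel_measurable borel"
    using assms(6) by (intro borel_measurable_continuous_onI convex_on_continuous) auto
  then have "(\<integral>\<omega>. f (\<Sum>i\<in>set xs. X i \<omega>) \<partial>M) = poibin_expectation f ?ps"
    using assms by (intro integral_sum_indep_binomial_rvs) auto
  also have "\<dots> \<le> poibin_expectation f (replicate (length ?ps) ((\<Sum>i\<in>set xs. x i) / length xs))"
  proof (rule poibin_expectation_le_binomial)
    show "discrete_convex f"
      using assms(6) by (rule convex_on_imp_discrete_convex)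
    show "set ?ps \<subseteq> {0..1}"
      using assms(5) by auto
    have "sum_list ?ps = real n * (\<Sum>i\<in>set xs. x i)" "length ?ps = length xs * n"
      using assms(1) by (induction xs) (auto simp: algebra_simps sum_list_replicate)
    then show "sum_list ?ps = real (length ?ps) * ((\<Sum>i\<in>set xs. x i) / length xs)"
      using assms(2) by simp
  qed
  also have "length ?ps = length xs * n"
    by (induction xs) auto
  finally show ?thesis .
qed

theorem proposition3:
  fixes m n :: nat and x :: "nat \<Rightarrow> real"
    and M :: "'a measure" and X :: "nat \<Rightarrow> 'a \<Rightarrow> real"
    and MS :: "'b measure" and S :: "'b \<Rightarrow> real"
    and P :: "nat \<Rightarrow> 'c measure" and Y :: "nat \<Rightarrow> nat \<Rightarrow> 'c \<Rightarrow> real"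
  assumes m2: "m \<ge> 2"
    and x01: "\<And>i. i \<in> {1..m} \<Longrightarrow> 0 < x i \<and> x i < 1"
    and M: "prob_space M"
    and X_indep: "prob_space.indep_vars M (\<lambda>_. borel) X {1..m}"
    and X_bin: "\<And>i. i \<in> {1..m} \<Longrightarrow> binomial_rv M (X i) n (x i)"
    and MS: "prob_space MS"
    and S_bin: "binomial_rv MS S (m * n) ((\<Sum>i=1..m. x i) / real m)"
    and P: "\<And>i. i \<in> {1..m} \<Longrightarrow> prob_space (P i)"
    and Y_indep: "\<And>i. i \<in> {1..m} \<Longrightarrow> prob_space.indep_vars (P i) (\<lambda>_. borel) (Y i) {1..m}"
    and Y_bin: "\<And>i j. i \<in> {1..m} \<Longrightarrow> j \<in> {1..m} \<Longrightarrow> binomial_rv (P i) (Y i j) n (x i)"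
  shows "cx_le (distr M borel (\<lambda>\<omega>. \<Sum>i=1..m. X i \<omega>)) (distr MS borel S)
    \<and> cx_le (distr MS borel S)
           (unif_mixture {1..m} (\<lambda>i. distr (P i) borel (\<lambda>\<omega>. \<Sum>j=1..m. Y i j \<omega>)))
    \<and> cx_le (distr M borel (\<lambda>\<omega>. \<Sum>i=1..m. X i \<omega>))
           (unif_mixture {1..m} (\<lambda>i. distr (P i) borel (\<lambda>\<omega>. \<Sum>j=1..m. Y i j \<omega>)))"
proof -
  define LX LS LY where "LX = distr M borel (\<lambda>\<omega>. \<Sum>i=1..m. X i \<omega>)" and "LS = distr MS borel S"
    and "LY = unif_mixture {1..m} (\<lambda>i. distr (P i) borel (\<lambda>\<omega>. \<Sum>j=1..m. Y i j \<omega>))"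
  define x_mean where "x_mean = (\<Sum>i=1..m. x i) / real m"
  have x: "x i \<in> {0..1}" if "i \<in> {1..m}" for i
    using x01[OF that] by auto
  have "0 \<le> (\<Sum>i=1..m. x i)" "(\<Sum>i=1..m. x i) \<le> real m"
    using x sum_bounded_above[of "{1..m}" x 1] by (auto intro: sum_nonneg)
  then have x_mean: "x_mean \<in> {0..1}"
    using m2 by (simp add: x_mean_def)
  have meas: "(\<lambda>\<omega>. \<Sum>i=1..m. X i \<omega>) \<in> borel_measurable M" "S \<in> borel_measurable MS"
    using X_bin S_bin by (auto intro!: borel_measurable_sum simp: binomial_rv_def)
  have idx: "distinct [1..<Suc m]" "[1..<Suc m] \<noteq> []" "set [1..<Suc m] = {1..m}"
    "length [1..<Suc m] = m"
    using m2 by auto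
  have Y_law: "distr (P i) borel (\<lambda>\<omega>. \<Sum>j=1..m. Y i j \<omega>) =
      distr (measure_pmf (binomial_pmf (m * n) (x i))) borel real" if "i \<in> {1..m}" for i
    using prob_space.distr_sum_iid_binomial_rvs[OF P[OF that] idx(1), unfolded idx(3,4),
        OF Y_indep[OF that] x[OF that] Y_bin[OF that]] .
  have "(\<integral>t. f t \<partial>LX) \<le> (\<integral>t. f t \<partial>LS) \<and> (\<integral>t. f t \<partial>LS) \<le> (\<integral>t. f t \<partial>LY)"
    if f: "convex_on UNIV f" for f
  proof -
    have f_meas: "f \<in> borel_measurable borel"
      using f by (intro borel_measurable_continuous_onI convex_on_continuous) auto
    have "(\<integral>t. f t \<partial>LS) = poibin_expectation f (replicate (m * n) x_mean)"
      unfolding LS_def integral_distr[OF meas(2) f_meas]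
      by (rule prob_space.integral_binomial_rv[OF MS S_bin[folded x_mean_def] x_mean f_meas])
    moreover have "(\<integral>t. f t \<partial>LX) \<le> poibin_expectation f (replicate (m * n) x_mean)"
      using prob_space.integral_convex_sum_indep_binomial_rvs_le[OF M idx(1,2), unfolded idx(3,4),
          OF X_indep X_bin x f]
      unfolding LX_def integral_distr[OF meas(1) f_meas] by (simp add: x_mean_def mult.commute)
    moreover have "poibin_expectation f (replicate (m * n) x_mean) \<le> (\<integral>t. f t \<partial>LY)"
      using integral_unif_mixture_binomial[of "{1..m}" x, OF _ _ x Y_law f_meas]
        binomial_expectation_mean_le[OF convex_on_imp_discrete_convex[OF f], of "{1..m}" x "m * n"]
        x m2
      unfolding LY_def by (simp add: x_mean_def)
    ultimately show ?thesis
      by simp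
  qed
  then show ?thesis
    unfolding cx_le_def LX_def[symmetric] LS_def[symmetric] LY_def[symmetric] by (meson order_trans)
qed

end
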